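(* Under the standing setup, for every $u\in\widetilde X$ there exists $z^*\in\mathbb{R}^m$ with $\|z^*\|\le\|u-u_{NN}\|$ and \[\tilde g_i(z^*,u)\le-\frac{\varepsilon}{60}\|u-u_{NN}\|\quad\forall\,i=1,\ldots,2\ell.\]
   Context: Norms are Euclidean. Standing setup: $X\subseteq\mathbb{R}^d$ has reach $\tau_X>0$, where $\tau_X=\sup\{t\ge0:\text{every }x\text{ with }d(x,X)<t\text{ has a unique closest point in }\overline X\}$; $\widetilde X=X+B(0,\tau_X/2)$; for $u\in\widetilde X$, $u_{NN}$ is the unique closest point to $u$ in $\overline X$. $\varepsilon\in(0,1)$. $S_X=\overline{\{(x-y)/\|x-y\|:x\ne y\in X\}}$. A linear $\Pi\colon\mathbb{R}^d\to\mathbb{R}^m$ provides $\eta$-convex hull distortion for $T\subseteq S^{d-1}$ if $|\,\|\Pi x\|-\|x\|\,|<\eta$ for all $x\in\operatorname{conv}(T)$. $\{w_1,\ldots,w_\ell\}\subseteq S_X$ is finite; $\Pi\in\mathbb{R}^{m\times d}$ provides $\frac{\varepsilon}{60}$-convex hull distortion for $S_X$ (e.g. it provides $\frac{\varepsilon}{240}$-convex hull distortion). For $z\in\mathbb{R}^m$, $u\in\widetilde X$, $i=1,\ldots,\ell$: $\tilde g_i(z,u)=\langle z,\Pi w_i\rangle-\langle u-u_{NN},w_i\rangle-\frac{\varepsilon}{30}\|u-u_{NN}\|$, $\tilde g_{\ell+i}(z,u)=\langle u-u_{NN},w_i\rangle-\langle z,\Pi w_i\rangle-\frac{\varepsilon}{30}\|u-u_{NN}\|$.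 *)

theory Defs
  imports "HOL-Analysis.Analysis"
begin

text \<open>Reach of a set (as an extended real, since it may be infinite): the supremum of all
  t \<ge> 0 such that every point at distance < t from X has a unique closest point in the
  closure of X.\<close>
definition unique_closest :: "'a::euclidean_space set \<Rightarrow> 'a \<Rightarrow> bool" where
  "unique_closest X x \<longleftrightarrow> (\<exists>!y. y \<in> closure X \<and> (\<forall>z\<in>closure X. dist x y \<le> dist x z))"

definition reach :: "'a::euclidean_space set \<Rightarrow> ereal" where
  "reach X = Sup {ereal t | t. t \<ge> 0 \<and>
      (\<forall>x. infdist x X < t \<longrightarrow> unique_closest X x)}"

definition tube :: "'a::euclidean_space set \<Rightarrow> 'a set" where
  "tube X = {x + v | x v. x \<in> X \<and> ereal (norm v) < reach X / 2}"

definition nn :: "'a::euclidean_space set \<Rightarrow> 'a \<Rightarrow> 'a" where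
  "nn X u = (THE y. y \<in> closure X \<and> (\<forall>z\<in>closure X. dist u y \<le> dist u z))"

definition secants :: "'a::euclidean_space set \<Rightarrow> 'a set" where
  "secants X = closure {(1 / norm (x - y)) *\<^sub>R (x - y) | x y. x \<in> X \<and> y \<in> X \<and> x \<noteq> y}"

definition convex_hull_distortion ::
    "('a::euclidean_space \<Rightarrow> 'b::euclidean_space) \<Rightarrow> real \<Rightarrow> 'a set \<Rightarrow> bool" where
  "convex_hull_distortion Proj eta T \<longleftrightarrow>
     (\<forall>x\<in>convex hull T. \<bar>norm (Proj x) - norm x\<bar> < eta)"

definition g_tilde ::
    "'a::euclidean_space set \<Rightarrow> ('a \<Rightarrow> 'b::euclidean_space) \<Rightarrow> (nat \<Rightarrow> 'a) \<Rightarrow> nat \<Rightarrow> real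
      \<Rightarrow> nat \<Rightarrow> 'b \<Rightarrow> 'a \<Rightarrow> real" where
  "g_tilde X Proj w l eps i z u =
     (if i \<le> l then
        inner z (Proj (w i)) - inner (u - nn X u) (w i) - eps / 30 * norm (u - nn X u)
      else
        inner (u - nn X u) (w (i - l)) - inner z (Proj (w (i - l))) - eps / 30 * norm (u - nn X u))"

end

theory Submission
  imports Defs
begin

text \<open>A minimax argument, carried out with a separating hyperplane. Put v = u - u_NN,
  r = \<parallel>v\<parallel> and \<eta> = \<epsilon>/60. The compact convex set of pairs (\<Pi> a, \<langle>v, a\<rangle>),
  a \<in> conv S_X, misses the closed convex set H = {(p, t). r \<parallel>p\<parallel> + t \<le> -\<eta> r}, since
  otherwise -\<langle>v, a\<rangle> \<le> r \<parallel>a\<parallel> < r (\<parallel>\<Pi> a\<parallel> + \<eta>) \<le> -\<langle>v, a\<rangle> by the distortion bound.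
  A separating functional (c, c0) stays bounded on the rays (0, -s) and (s c, -r s \<parallel>c\<parallel>)
  of H, which forces \<parallel>c\<parallel> \<le> c0 r, and z = -c / c0 is the required vector. As S_X = -S_X,
  the bounds at w_i and -w_i give both families of constraints.\<close>

lemma uminus_secants:
  fixes X :: "'a::euclidean_space set"
  assumes "s \<in> secants X"
  shows "- s \<in> secants X"
proof -
  let ?S = "{(1 / norm (x - y)) *\<^sub>R (x - y) | x y. x \<in> X \<and> y \<in> X \<and> x \<noteq> y}"
  have "uminus ` ?S \<subseteq> ?S"
    by clarify (metis minus_diff_eq norm_minus_commute scaleR_right.minus)
  then have "uminus ` closure ?S \<subseteq> closure ?S"
    using closure_linear_image_subset[OF linear_uminus, of ?S] closure_mono by blast
  then show ?thesis
    using assms unfolding secants_def by blast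
qed

lemma compact_secants:
  fixes X :: "'a::euclidean_space set"
  shows "compact (secants X)"
proof -
  have "{(1 / norm (x - y)) *\<^sub>R (x - y) | x y. x \<in> X \<and> y \<in> X \<and> x \<noteq> y} \<subseteq> cball 0 1"
    by auto
  then show ?thesis
    unfolding secants_def using bounded_cball bounded_subset compact_closure by blast
qed

lemma nonpos_if_multiples_bounded:
  fixes a B :: real
  assumes "\<And>k. 0 < k \<Longrightarrow> k * a < B"
  shows "a \<le> 0"
proof (rule ccontr)
  assume "\<not> a \<le> 0"
  then have "(\<bar>B\<bar> + 1) / a * a = \<bar>B\<bar> + 1" and "0 < (\<bar>B\<bar> + 1) / a"
    by auto
  then show False
    using assms[of "(\<bar>B\<bar> + 1) / a"] by linarith
qed

lemma convex_norm_cone: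
  fixes r e :: real
  assumes "0 \<le> r"
  shows "convex {(p :: 'a::real_normed_vector, t). r * norm p + t \<le> e}"
  unfolding convex_def
proof clarsimp
  fix p q :: 'a and s t u v :: real
  assume p: "r * norm p + s \<le> e" and q: "r * norm q + t \<le> e"
    and uv: "0 \<le> u" "0 \<le> v" "u + v = 1"
  have "r * norm (u *\<^sub>R p + v *\<^sub>R q) \<le> r * (u * norm p + v * norm q)"
    using norm_triangle_ineq[of "u *\<^sub>R p" "v *\<^sub>R q"] uv assms by (intro mult_left_mono) auto
  moreover have "u * (r * norm p + s) + v * (r * norm q + t) \<le> u * e + v * e"
    using p q uv by (intro add_mono mult_left_mono)
  moreover have "u * e + v * e = e"
    using uv(3) by (metis distrib_right mult_1)
  ultimately show "r * norm (u *\<^sub>R p + v *\<^sub>R q) + (u * s + v * t) \<le> e"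
    by (simp add: algebra_simps)
qed

lemma closed_norm_cone:
  fixes r e :: real
  shows "closed {(p :: 'a::real_normed_vector, t). r * norm p + t \<le> e}"
proof -
  have "closed {x :: 'a \<times> real. r * norm (fst x) + snd x \<le> e}"
    by (intro closed_Collect_le continuous_intros)
  then show ?thesis
    by (simp add: case_prod_beta')
qed

lemma functional_bounded_on_norm_cone:
  fixes c :: "'a::real_inner" and r e c\<^sub>0 b :: real
  assumes "0 \<le> r"
    and bounded: "\<And>p t. r * norm p + t \<le> e \<Longrightarrow> inner c p + c\<^sub>0 * t < b"
  shows "0 \<le> c\<^sub>0" and "norm c \<le> c\<^sub>0 * r"
proof -
  have "- c\<^sub>0 \<le> 0"
  proof (rule nonpos_if_multiples_bounded)
    fix k :: real
    assume "0 < k"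
    then show "k * - c\<^sub>0 < b - c\<^sub>0 * e"
      using bounded[of 0 "e - k"] by (simp add: algebra_simps)
  qed
  then show "0 \<le> c\<^sub>0"
    by simp
  have "norm c * (norm c - c\<^sub>0 * r) \<le> 0"
  proof (rule nonpos_if_multiples_bounded)
    fix k :: real
    assume "0 < k"
    then show "k * (norm c * (norm c - c\<^sub>0 * r)) < b - c\<^sub>0 * e"
      using bounded[of "k *\<^sub>R c" "e - r * (k * norm c)"]
      by (simp add: power2_eq_square algebra_simps flip: power2_norm_eq_inner)
  qed
  then show "norm c \<le> c\<^sub>0 * r"
    using \<open>0 \<le> c\<^sub>0\<close> \<open>0 \<le> r\<close> by (cases "norm c = 0") (auto simp: mult_le_0_iff)
qed

lemma inner_dominated_through_linear_map:
  fixes Proj :: "'a::euclidean_space \<Rightarrow> 'b::euclidean_space"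
  assumes lin: "linear Proj" and A: "convex A" "compact A"
    and distortion: "\<And>a. a \<in> A \<Longrightarrow> norm a < norm (Proj a) + eta"
    and r: "norm v \<le> r" "0 < r"
  shows "\<exists>z. norm z \<le> r \<and> (\<forall>a\<in>A. inner z (Proj a) - inner v a < eta * r)"
proof (cases "A = {}")
  case True
  then show ?thesis
    using r by (intro exI[of _ 0]) auto
next
  case False
  define H :: "('b \<times> real) set" where "H = {(p, t). r * norm p + t \<le> - eta * r}"
  define f where "f a = (Proj a, inner v a)" for a
  have "linear f"
    unfolding f_def using lin[unfolded linear_conv_bounded_linear]
    by (intro bounded_linear.linear bounded_linear_Pair bounded_linear_inner_right)
  then have W: "convex (f ` A)" "compact (f ` A)" "f ` A \<noteq> {}"
    using A False by (auto intro: convex_linear_image compact_continuous_image linear_continuous_on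
        simp: linear_conv_bounded_linear)
  have "H \<inter> f ` A = {}"
  proof (rule ccontr)
    assume "H \<inter> f ` A \<noteq> {}"
    then obtain a where "a \<in> A" and a: "r * norm (Proj a) + inner v a \<le> - eta * r"
      unfolding H_def f_def by auto
    have "- inner v a \<le> r * norm a"
      using norm_cauchy_schwarz[of "- v" a] mult_right_mono[OF r(1) norm_ge_zero[of a]] by simp
    also have "\<dots> < r * (norm (Proj a) + eta)"
      using distortion[OF \<open>a \<in> A\<close>] r(2) by simp
    finally show False
      using a by (simp add: algebra_simps)
  qed
  then obtain c b where sep: "\<forall>x\<in>H. inner c x < b" "\<forall>x\<in>f ` A. b < inner c x"
    using separating_hyperplane_closed_compact[OF _ _ W] convex_norm_cone closed_norm_cone r(2)
    unfolding H_def by (metis less_eq_real_def)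
  obtain c' c\<^sub>0 where c: "c = (c', c\<^sub>0)"
    by fastforce
  have H_side: "inner c' p + c\<^sub>0 * t < b" if "r * norm p + t \<le> - eta * r" for p t
    using sep(1) that unfolding H_def c by auto
  have A_side: "b < inner c' (Proj a) + c\<^sub>0 * inner v a" if "a \<in> A" for a
    using sep(2) that unfolding f_def c by auto
  have c': "0 \<le> c\<^sub>0" "norm c' \<le> c\<^sub>0 * r"
    using functional_bounded_on_norm_cone[OF less_imp_le[OF r(2)] H_side] by blast+
  have gap: "- (inner c' (Proj a) + c\<^sub>0 * inner v a) < c\<^sub>0 * (eta * r)" if "a \<in> A" for a
    using A_side[OF that] H_side[of 0 "- eta * r"] by simp
  have "0 < c\<^sub>0"
  proof (rule ccontr)
    assume "\<not> 0 < c\<^sub>0"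
    then have "c\<^sub>0 = 0" "c' = 0"
      using c' by auto
    then show False
      using gap False by auto
  qed
  show ?thesis
  proof (intro exI conjI ballI)
    show "norm (- (1 / c\<^sub>0) *\<^sub>R c') \<le> r"
      using c' \<open>0 < c\<^sub>0\<close> by (simp add: field_simps)
    fix a
    assume "a \<in> A"
    have "c\<^sub>0 * (inner (- (1 / c\<^sub>0) *\<^sub>R c') (Proj a) - inner v a)
        = - (inner c' (Proj a) + c\<^sub>0 * inner v a)"
      using \<open>0 < c\<^sub>0\<close> by (simp add: algebra_simps)
    then show "inner (- (1 / c\<^sub>0) *\<^sub>R c') (Proj a) - inner v a < eta * r"
      using gap[OF \<open>a \<in> A\<close>] \<open>0 < c\<^sub>0\<close> by (metis mult_less_cancel_left_pos)
  qed
qed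

theorem lemma4p3:
  fixes X :: "'a::euclidean_space set"
    and Proj :: "'a \<Rightarrow> 'b::euclidean_space"
    and w :: "nat \<Rightarrow> 'a"
    and l :: nat
    and eps :: real
    and u :: 'a
  assumes reach_pos: "reach X > 0"
    and eps: "0 < eps" "eps < 1"
    and w: "\<forall>i\<in>{1..l}. w i \<in> secants X"
    and lin: "linear Proj"
    and dist: "convex_hull_distortion Proj (eps / 60) (secants X)"
    and u: "u \<in> tube X"
  shows "\<exists>z. norm z \<le> norm (u - nn X u) \<and>
    (\<forall>i\<in>{1..2*l}. g_tilde X Proj w l eps i z u \<le> - (eps / 60) * norm (u - nn X u))"
proof -
  define v where "v = u - nn X u"
  have "\<exists>z. norm z \<le> norm v \<and>
    (\<forall>i\<in>{1..2*l}. g_tilde X Proj w l eps i z u \<le> - (eps / 60) * norm v)"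
  proof (cases "v = 0")
    case True
    then show ?thesis
      by (intro exI[of _ 0]) (simp add: g_tilde_def v_def)
  next
    case False
    have distortion: "norm a < norm (Proj a) + eps / 60" if "a \<in> convex hull secants X" for a
    proof -
      have "\<bar>norm (Proj a) - norm a\<bar> < eps / 60"
        using dist that unfolding convex_hull_distortion_def by blast
      then show ?thesis
        by linarith
    qed
    obtain z where z: "norm z \<le> norm v"
      "\<And>a. a \<in> convex hull secants X \<Longrightarrow> inner z (Proj a) - inner v a < eps / 60 * norm v"
      using inner_dominated_through_linear_map[where A = "convex hull secants X" and v = v, OF lin
          convex_convex_hull compact_convex_hull[OF compact_secants] distortion order_refl] False
      by auto
    have hull: "w i \<in> convex hull secants X" "- w i \<in> convex hull secants X"
      if "i \<in> {1..l}" for i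
      using w that by (simp_all add: hull_inc uminus_secants)
    have "g_tilde X Proj w l eps i z u \<le> - (eps / 60) * norm v" if i: "i \<in> {1..2*l}" for i
    proof (cases "i \<le> l")
      case True
      then have "i \<in> {1..l}"
        using i by auto
      then have "inner z (Proj (w i)) - inner v (w i) < eps / 60 * norm v"
        using z(2) hull(1) by blast
      with True show ?thesis
        by (simp add: g_tilde_def flip: v_def)
    next
      case False
      then have "i - l \<in> {1..l}"
        using i by auto
      then have "inner z (Proj (- w (i - l))) - inner v (- w (i - l)) < eps / 60 * norm v"
        using z(2) hull(2) by blast
      with False show ?thesis
        by (simp add: g_tilde_def linear_neg[OF lin] flip: v_def)
    qed
    with z(1) show ?thesis
      by blast
  qed
  then show ?thesis
    by (simp only: v_def)
qed

end
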